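(* Let $G$ be a dicotic nonzugzwang scoring game all of whose terminal positions are numbers. Then $G_{\sigma(G)}=m(G)$.
   Context: A scoring game is $G=\langle G^L\mid G^R\rangle$ with $G^L,G^R$ finite nonempty sets of scoring games or empty sets decorated with a real, $\emptyset^s$; $\langle\emptyset^s\mid\emptyset^s\rangle$ is the number $s$. $Ls(\langle\emptyset^s\mid G^R\rangle)=s$, $Rs(\langle G^L\mid\emptyset^s\rangle)=s$, otherwise $Ls(G)=\max_{G^l\in G^L}Rs(G^l)$, $Rs(G)=\min_{G^r\in G^R}Ls(G^r)$. Disjunctive sum $G_1+G_2$: Left options are all $G_1^l+G_2$, $G_1+G_2^l$ (Left side $\emptyset^{\ell_1+\ell_2}$ if neither has Left options); symmetrically for Right; $H+c$ for a number $c$ adds $c$ to every terminal score; $nG$ is the sum of $n$ copies of $G$. Dicotic: at every position both players have options or neither; nonzugzwang: $Ls(H)\ge Rs(H)$ at every position. For dicotic nonzugzwang $G$, the limits $\lim_{n\to\infty}Ls(nG)/n$ and $\lim_{n\to\infty}Rs(nG)/n$ exist and are equal (Milnor); their common value is the mean $m(G)$. Cooling: if $G$ is a number $k$, $G_t=k$, $\sigma(G)=0$; otherwise $\widetilde G_t=\langle \{G^l_t-t\}\mid \{G^r_t+t\}\rangle$, $t_0=\min\{t\ge0: Ls(\widetilde G_t)=Rs(\widetilde G_t)\}$, $G_t=\widetilde G_t$ for $t\le t_0$ and $G_t$ is the number $Ls(\widetilde G_{t_0})$ for $t>t_0$; $\sigma(G)=t_0$ is the temperature. Thus $G_{\sigma(G)}$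 is a number (namely $Ls(\widetilde G_{\sigma(G)})=Rs(\widetilde G_{\sigma(G)})$). *)

theory Defs
  imports Complex_Main
begin

text \<open>One side of a scoring game: either the empty set decorated with a real
  (\<open>Emp s\<close> = \<emptyset>^s) or a (finite) list of options.\<close>
datatype 'a side = Emp real | Opts "'a list"

datatype sg = SG "sg side" "sg side"

fun wf_sg :: "sg \<Rightarrow> bool" where
  "wf_sg (SG L R) =
     ((case L of Emp _ \<Rightarrow> True | Opts ls \<Rightarrow> ls \<noteq> [] \<and> (\<forall>g\<in>set ls. wf_sg g)) \<and>
      (case R of Emp _ \<Rightarrow> True | Opts rs \<Rightarrow> rs \<noteq> [] \<and> (\<forall>g\<in>set rs. wf_sg g)))"

definition num :: "real \<Rightarrow> sg" where
  "num s = SG (Emp s) (Emp s)"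

definition is_num :: "sg \<Rightarrow> bool" where
  "is_num G \<longleftrightarrow> (\<exists>s. G = num s)"

fun scores :: "sg \<Rightarrow> real \<times> real" where
  "scores (SG L R) =
     ((case L of Emp s \<Rightarrow> s | Opts ls \<Rightarrow> Max (set (map (\<lambda>g. snd (scores g)) ls))),
      (case R of Emp s \<Rightarrow> s | Opts rs \<Rightarrow> Min (set (map (\<lambda>g. fst (scores g)) rs))))"

definition Ls :: "sg \<Rightarrow> real" where "Ls G = fst (scores G)"
definition Rs :: "sg \<Rightarrow> real" where "Rs G = snd (scores G)"

fun plus_sg :: "sg \<Rightarrow> sg \<Rightarrow> sg" where
  "plus_sg (SG L1 R1) (SG L2 R2) =
     SG (case (L1, L2) of
           (Emp l1, Emp l2) \<Rightarrow> Emp (l1 + l2)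
         | (Opts ls, Emp _) \<Rightarrow> Opts (map (\<lambda>g. plus_sg g (SG L2 R2)) ls)
         | (Emp _, Opts ls') \<Rightarrow> Opts (map (\<lambda>g. plus_sg (SG L1 R1) g) ls')
         | (Opts ls, Opts ls') \<Rightarrow>
              Opts (map (\<lambda>g. plus_sg g (SG L2 R2)) ls @ map (\<lambda>g. plus_sg (SG L1 R1) g) ls'))
        (case (R1, R2) of
           (Emp r1, Emp r2) \<Rightarrow> Emp (r1 + r2)
         | (Opts rs, Emp _) \<Rightarrow> Opts (map (\<lambda>g. plus_sg g (SG L2 R2)) rs)
         | (Emp _, Opts rs') \<Rightarrow> Opts (map (\<lambda>g. plus_sg (SG L1 R1) g) rs')
         | (Opts rs, Opts rs') \<Rightarrow>
              Opts (map (\<lambda>g. plus_sg g (SG L2 R2)) rs @ map (\<lambda>g. plus_sg (SG L1 R1) g) rs'))"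

fun times_sg :: "nat \<Rightarrow> sg \<Rightarrow> sg" where
  "times_sg 0 G = num 0"
| "times_sg (Suc n) G = plus_sg G (times_sg n G)"

inductive position :: "sg \<Rightarrow> sg \<Rightarrow> bool" where
  self: "position G G"
| left: "position G (SG (Opts ls) R) \<Longrightarrow> g \<in> set ls \<Longrightarrow> position G g"
| right: "position G (SG L (Opts rs)) \<Longrightarrow> g \<in> set rs \<Longrightarrow> position G g"

definition dicotic :: "sg \<Rightarrow> bool" where
  "dicotic G \<longleftrightarrow> (\<forall>H L R. position G H \<longrightarrow> H = SG L R \<longrightarrow>
      ((\<exists>a. L = Emp a) \<longleftrightarrow> (\<exists>b. R = Emp b)))"

definition nonzugzwang :: "sg \<Rightarrow> bool" where
  "nonzugzwang G \<longleftrightarrow> (\<forall>H. position G H \<longrightarrow> Ls H \<ge> Rs H)"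

definition terminals_are_numbers :: "sg \<Rightarrow> bool" where
  "terminals_are_numbers G \<longleftrightarrow>
     (\<forall>a b. position G (SG (Emp a) (Emp b)) \<longrightarrow> a = b)"

definition mean :: "sg \<Rightarrow> real" where
  "mean G = lim (\<lambda>n. Ls (times_sg n G) / real n)"

lemma size_side_mem: "z \<in> set_side S \<Longrightarrow> size z < Suc (size_side size S)"
  by (cases S) (auto dest!: size_list_estimation' [where f=size and y="size z", OF _ order_refl])

function cool :: "sg \<Rightarrow> real \<Rightarrow> sg" where
  "cool (SG L R) t =
     (if is_num (SG L R) then SG L R else
      (let tl = (\<lambda>u. SG (map_side (\<lambda>g. plus_sg (cool g u) (num (- u))) L)
                         (map_side (\<lambda>g. plus_sg (cool g u) (num u)) R));
           t0 = Inf {u. u \<ge> 0 \<and> Ls (tl u) = Rs (tl u)}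
       in if t \<le> t0 then tl t else num (Ls (tl t0))))"
  by pat_completeness auto
termination
  by (relation "measure (\<lambda>p. size (fst p))")
     (auto dest!: size_side_mem)

fun cool_tilde :: "sg \<Rightarrow> real \<Rightarrow> sg" where
  "cool_tilde (SG L R) u =
     SG (map_side (\<lambda>g. plus_sg (cool g u) (num (- u))) L)
        (map_side (\<lambda>g. plus_sg (cool g u) (num u)) R)"

definition temperature :: "sg \<Rightarrow> real" where
  "temperature G = (if is_num G then 0 else
      Inf {u. u \<ge> 0 \<and> Ls (cool_tilde G u) = Rs (cool_tilde G u)})"

end

theory Submission
  imports Defs "HOL-Library.Multiset" "HOL-Analysis.Lipschitz"
begin

text \<open>Let \<open>m\<close> be the mast of \<open>G\<close>, the number \<open>G\<^sub>t\<close> for \<open>t\<close> above the temperature. For a list of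
  dicotic nonzugzwang games and \<open>u \<ge> 0\<close>, compare the sum of the games with the sum of the games
  cooled by \<open>u\<close>: their Left scores, and likewise their Right scores, differ by at most \<open>u\<close>, however
  many summands there are. This is proved by induction on the sum: a move in a summand that is still
  hot at \<open>u\<close> is also available in the cooled sum, at the price \<open>u\<close>, and a move in a summand that is
  already frozen is bounded by the wall of its thermograph together with Milnor's inequalities for
  disjunctive sums. For \<open>n\<close> copies of \<open>G\<close> and \<open>u\<close> above the temperature every cooled summand is the
  number \<open>m\<close>, so \<open>n m \<le> Ls (n G) \<le> n m + u\<close>, and \<open>Ls (n G) / n\<close> tends to \<open>m\<close>.\<close>

lemma sum_list_size_update:
  "i < length xs \<Longrightarrow> size g < size (xs ! i) \<Longrightarrow> (\<Sum>x\<leftarrow>xs[i := g]. size x) < (\<Sum>x\<leftarrow>xs. size x)"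
  by (induction xs arbitrary: i) (auto split: nat.split)

lemma list_all_update: "list_all P xs \<Longrightarrow> P y \<Longrightarrow> list_all P (xs[i := y])"
  by (auto simp: list_all_iff dest: set_update_subset_insert[THEN subsetD])

lemma list_all_mset: "mset xs = mset ys \<Longrightarrow> list_all P xs \<longleftrightarrow> list_all P ys"
  by (simp add: list_all_iff flip: set_mset_mset)

lemma sum_list_map_mset:
  fixes f :: "'a \<Rightarrow> 'b::comm_monoid_add"
  shows "mset xs = mset ys \<Longrightarrow> (\<Sum>x\<leftarrow>xs. f x) = (\<Sum>x\<leftarrow>ys. f x)"
  by (metis mset_map sum_mset_sum_list)

definition slopes_between :: "real \<Rightarrow> real \<Rightarrow> (real \<Rightarrow> real) \<Rightarrow> bool" where
  "slopes_between a b f \<longleftrightarrow>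
     (\<forall>u v. 0 \<le> u \<longrightarrow> u \<le> v \<longrightarrow> a * (v - u) \<le> f v - f u \<and> f v - f u \<le> b * (v - u))"

lemma slopes_betweenD:
  "slopes_between a b f \<Longrightarrow> 0 \<le> u \<Longrightarrow> u \<le> v \<Longrightarrow> a * (v - u) \<le> f v - f u \<and> f v - f u \<le> b * (v - u)"
  by (simp add: slopes_between_def)

lemma slopes_between_cong:
  "(\<And>u. 0 \<le> u \<Longrightarrow> f u = g u) \<Longrightarrow> slopes_between a b f \<longleftrightarrow> slopes_between a b g"
  by (simp add: slopes_between_def)

lemma slopes_between_Max:
  assumes "finite I" "I \<noteq> {}" "\<And>i. i \<in> I \<Longrightarrow> slopes_between a b (f i)"
  shows "slopes_between a b (\<lambda>u. Max ((\<lambda>i. f i u) ` I))"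
  unfolding slopes_between_def
proof (intro allI impI)
  fix u v :: real assume uv: "0 \<le> u" "u \<le> v"
  note sl = slopes_betweenD[OF assms(3) uv]
  have "f i v \<le> Max ((\<lambda>i. f i u) ` I) + b * (v - u) \<and>
      f i u \<le> Max ((\<lambda>i. f i v) ` I) - a * (v - u)" if "i \<in> I" for i
  proof -
    have "f i w \<le> Max ((\<lambda>i. f i w) ` I)" for w
      using assms(1) that by (intro Max_ge) auto
    from this[of u] this[of v] sl[OF that] show ?thesis by linarith
  qed
  then have "Max ((\<lambda>i. f i v) ` I) \<le> Max ((\<lambda>i. f i u) ` I) + b * (v - u)"
    "Max ((\<lambda>i. f i u) ` I) \<le> Max ((\<lambda>i. f i v) ` I) - a * (v - u)"
    using assms(1,2) by (simp_all add: Max_le_iff)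
  then show "a * (v - u) \<le> Max ((\<lambda>i. f i v) ` I) - Max ((\<lambda>i. f i u) ` I) \<and>
      Max ((\<lambda>i. f i v) ` I) - Max ((\<lambda>i. f i u) ` I) \<le> b * (v - u)"
    by linarith
qed

lemma slopes_between_Min:
  assumes "finite I" "I \<noteq> {}" "\<And>i. i \<in> I \<Longrightarrow> slopes_between a b (f i)"
  shows "slopes_between a b (\<lambda>u. Min ((\<lambda>i. f i u) ` I))"
  unfolding slopes_between_def
proof (intro allI impI)
  fix u v :: real assume uv: "0 \<le> u" "u \<le> v"
  note sl = slopes_betweenD[OF assms(3) uv]
  have "Min ((\<lambda>i. f i v) ` I) - b * (v - u) \<le> f i u \<and>
      Min ((\<lambda>i. f i u) ` I) + a * (v - u) \<le> f i v" if "i \<in> I" for i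
  proof -
    have "Min ((\<lambda>i. f i w) ` I) \<le> f i w" for w
      using assms(1) that by (intro Min_le) auto
    from this[of u] this[of v] sl[OF that] show ?thesis by linarith
  qed
  then have "Min ((\<lambda>i. f i v) ` I) - b * (v - u) \<le> Min ((\<lambda>i. f i u) ` I)"
    "Min ((\<lambda>i. f i u) ` I) + a * (v - u) \<le> Min ((\<lambda>i. f i v) ` I)"
    using assms(1,2) by (simp_all add: Min_ge_iff)
  then show "a * (v - u) \<le> Min ((\<lambda>i. f i v) ` I) - Min ((\<lambda>i. f i u) ` I) \<and>
      Min ((\<lambda>i. f i v) ` I) - Min ((\<lambda>i. f i u) ` I) \<le> b * (v - u)"
    by linarith
qed

lemma slopes_between_add_id:
  "slopes_between a b f \<Longrightarrow> slopes_between (a + 1) (b + 1) (\<lambda>u. f u + u)"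
  by (simp add: slopes_between_def algebra_simps)

lemma slopes_between_diff_id:
  "slopes_between a b f \<Longrightarrow> slopes_between (a - 1) (b - 1) (\<lambda>u. f u - u)"
  by (simp add: slopes_between_def algebra_simps)

lemma slopes_between_diff:
  "slopes_between a b f \<Longrightarrow> slopes_between c d g \<Longrightarrow> slopes_between (a - d) (b - c) (\<lambda>u. f u - g u)"
  by (fastforce simp: slopes_between_def algebra_simps)

lemma slopes_between_min:
  assumes "slopes_between a b f" "a \<le> 0" "0 \<le> b" "0 \<le> t"
  shows "slopes_between a b (\<lambda>u. f (min u t))"
  unfolding slopes_between_def
proof (intro allI impI)
  fix u v :: real assume uv: "0 \<le> u" "u \<le> v"
  define d where "d = min v t - min u t"
  have d: "0 \<le> d" "d \<le> v - u" using uv by (auto simp: d_def)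
  have "a * d \<le> f (min v t) - f (min u t) \<and> f (min v t) - f (min u t) \<le> b * d"
    using slopes_betweenD[OF assms(1), of "min u t" "min v t"] uv assms(4) by (simp add: d_def)
  moreover have "a * (v - u) \<le> a * d" "b * d \<le> b * (v - u)"
    using d assms(2,3) by (auto intro: mult_left_mono mult_left_mono_neg)
  ultimately show "a * (v - u) \<le> f (min v t) - f (min u t) \<and> f (min v t) - f (min u t) \<le> b * (v - u)"
    by linarith
qed

lemma slopes_between_continuous:
  assumes "slopes_between a b f"
  shows "continuous_on {0..} f"
proof (rule lipschitz_on_continuous_on)
  have bound: "\<bar>f v - f u\<bar> \<le> (\<bar>a\<bar> + \<bar>b\<bar>) * (v - u)" if "0 \<le> u" "u \<le> v" for u v
  proof -
    have "- \<bar>a\<bar> * (v - u) \<le> a * (v - u)" "b * (v - u) \<le> \<bar>b\<bar> * (v - u)"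
      using that mult_right_mono[of "- \<bar>a\<bar>" a "v - u"] mult_right_mono[of b "\<bar>b\<bar>" "v - u"] by auto
    moreover have "0 \<le> \<bar>a\<bar> * (v - u)" "0 \<le> \<bar>b\<bar> * (v - u)" using that by auto
    ultimately show ?thesis using slopes_betweenD[OF assms that] unfolding abs_le_iff distrib_right by linarith
  qed
  show "(\<bar>a\<bar> + \<bar>b\<bar>)-lipschitz_on {0..} f"
  proof (intro lipschitz_onI)
    fix x y :: real assume "x \<in> {0..}" "y \<in> {0..}"
    then show "dist (f x) (f y) \<le> (\<bar>a\<bar> + \<bar>b\<bar>) * dist x y"
      using bound[of x y] bound[of y x] by (cases "x \<le> y") (auto simp: dist_real_def abs_minus_commute)
  qed simp
qed

lemma slopes_between_Inf_zeros:
  assumes D: "slopes_between a 0 D" and "0 \<le> D 0" "0 \<le> b" "D b \<le> 0"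
  shows "0 \<le> Inf {u. 0 \<le> u \<and> D u = 0} \<and> D (Inf {u. 0 \<le> u \<and> D u = 0}) = 0"
proof -
  define Z where "Z = {u \<in> {0..}. D u = 0}"
  have cont: "continuous_on {0..} D" using D by (rule slopes_between_continuous)
  obtain z where "0 \<le> z" "D z = 0"
    using IVT2'[of D b 0 0] assms(2-4) continuous_on_subset[OF cont] by fastforce
  then have "Z \<noteq> {}" by (auto simp: Z_def)
  moreover have "bdd_below Z" by (auto simp: Z_def intro: bdd_belowI[of _ 0])
  moreover have "closed Z"
    unfolding Z_def by (rule continuous_closed_preimage_constant[OF cont closed_atLeast])
  ultimately have "Inf Z \<in> Z" by (rule closed_contains_Inf)
  moreover have "Z = {u. 0 \<le> u \<and> D u = 0}" by (auto simp: Z_def)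
  ultimately show ?thesis by auto
qed

lemma lim_eq_of_linear_bounds:
  fixes f :: "nat \<Rightarrow> real"
  assumes "\<And>n. real n * m \<le> f n \<and> f n \<le> real n * m + c"
  shows "lim (\<lambda>n. f n / real n) = m"
proof (rule limI, rule tendsto_sandwich[of "\<lambda>n. m" _ _ "\<lambda>n. m + c / real n"])
  show "\<forall>\<^sub>F n in sequentially. m \<le> f n / real n"
    using assms by (intro eventually_sequentiallyI[of 1]) (simp add: pos_le_divide_eq mult.commute)
  show "\<forall>\<^sub>F n in sequentially. f n / real n \<le> m + c / real n"
    using assms by (intro eventually_sequentiallyI[of 1]) (simp add: pos_divide_le_eq field_simps)
  show "(\<lambda>n. m + c / real n) \<longlonglongrightarrow> m"
    using tendsto_add[OF tendsto_const lim_const_over_n, of m c] by simp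
qed simp

lemma Ls_Emp: "Ls (SG (Emp a) R) = a"
  by (simp add: Ls_def)

lemma Rs_Emp: "Rs (SG L (Emp a)) = a"
  by (simp add: Rs_def)

lemma Ls_Opts: "Ls (SG (Opts ls) R) = Max (Rs ` set ls)"
  by (simp add: Ls_def Rs_def image_image)

lemma Rs_Opts: "Rs (SG L (Opts rs)) = Min (Ls ` set rs)"
  by (simp add: Ls_def Rs_def image_image)

lemma Ls_num [simp]: "Ls (num a) = a" and Rs_num [simp]: "Rs (num a) = a"
  by (simp_all add: num_def Ls_Emp Rs_Emp)

lemma is_num_SG: "is_num (SG L R) \<longleftrightarrow> (\<exists>a. L = Emp a \<and> R = Emp a)"
  by (auto simp: is_num_def num_def)

lemma is_num_num [simp]: "is_num (num a)"
  by (auto simp: is_num_def)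

fun lopts :: "sg \<Rightarrow> sg list" where
  "lopts (SG (Opts ls) R) = ls"
| "lopts (SG (Emp a) R) = []"

fun ropts :: "sg \<Rightarrow> sg list" where
  "ropts (SG L (Opts rs)) = rs"
| "ropts (SG L (Emp a)) = []"

lemma lopts_num [simp]: "lopts (num a) = []" and ropts_num [simp]: "ropts (num a) = []"
  by (simp_all add: num_def)

lemma size_lopts: "g \<in> set (lopts H) \<Longrightarrow> size g < size H"
  by (cases H rule: lopts.cases) (auto dest: size_list_estimation'[where y = "size g" and f = size])

lemma size_ropts: "g \<in> set (ropts H) \<Longrightarrow> size g < size H"
  by (cases H rule: ropts.cases) (auto dest: size_list_estimation'[where y = "size g" and f = size])

lemma Ls_le_iff: "lopts H \<noteq> [] \<Longrightarrow> Ls H \<le> c \<longleftrightarrow> (\<forall>k\<in>set (lopts H). Rs k \<le> c)"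
  by (cases H rule: lopts.cases) (auto simp: Ls_Opts)

lemma ge_Rs_iff: "ropts H \<noteq> [] \<Longrightarrow> c \<le> Rs H \<longleftrightarrow> (\<forall>k\<in>set (ropts H). c \<le> Ls k)"
  by (cases H rule: ropts.cases) (auto simp: Rs_Opts)

lemma Rs_lopt_le: "k \<in> set (lopts H) \<Longrightarrow> Rs k \<le> Ls H"
  by (cases H rule: lopts.cases) (auto simp: Ls_Opts)

lemma Rs_le_Ls_ropt: "k \<in> set (ropts H) \<Longrightarrow> Rs H \<le> Ls k"
  by (cases H rule: ropts.cases) (auto simp: Rs_Opts)

lemma Ls_attained: "lopts H \<noteq> [] \<Longrightarrow> \<exists>k\<in>set (lopts H). Rs k = Ls H"
proof (cases H rule: lopts.cases)
  case (1 ls R)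
  assume "lopts H \<noteq> []"
  then have "Max (Rs ` set ls) \<in> Rs ` set ls" using 1 by (intro Max_in) auto
  then show ?thesis using 1 by (auto simp: Ls_Opts)
qed simp

lemma Rs_attained: "ropts H \<noteq> [] \<Longrightarrow> \<exists>k\<in>set (ropts H). Ls k = Rs H"
proof (cases H rule: ropts.cases)
  case (1 L rs)
  assume "ropts H \<noteq> []"
  then have "Min (Ls ` set rs) \<in> Ls ` set rs" using 1 by (intro Min_in) auto
  then show ?thesis using 1 by (auto simp: Rs_Opts)
qed simp

fun dnz :: "sg \<Rightarrow> bool" where
  "dnz (SG (Emp a) (Emp b)) \<longleftrightarrow> a = b"
| "dnz (SG (Opts ls) (Opts rs)) \<longleftrightarrow>
     ls \<noteq> [] \<and> rs \<noteq> [] \<and> (\<forall>g\<in>set ls. dnz g) \<and> (\<forall>g\<in>set rs. dnz g) \<and>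
     Rs (SG (Opts ls) (Opts rs)) \<le> Ls (SG (Opts ls) (Opts rs))"
| "dnz (SG (Emp a) (Opts rs)) \<longleftrightarrow> False"
| "dnz (SG (Opts ls) (Emp b)) \<longleftrightarrow> False"

lemma dnz_num [simp]: "dnz (num a)"
  by (simp add: num_def)

lemma dnz_cases:
  assumes "dnz H"
  obtains (num) a where "H = num a"
  | (game) ls rs where "H = SG (Opts ls) (Opts rs)" "ls \<noteq> []" "rs \<noteq> []"
      "\<forall>g\<in>set ls. dnz g" "\<forall>g\<in>set rs. dnz g" "Rs H \<le> Ls H"
proof (cases H)
  case (SG L R)
  then show ?thesis using assms that by (cases L; cases R) (auto simp: num_def)
qed

lemma dnz_nonzugzwang: "dnz H \<Longrightarrow> Rs H \<le> Ls H"
  by (erule dnz_cases) auto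

lemma dnz_wf: "dnz H \<Longrightarrow> wf_sg H"
proof (induction H)
  case (SG L R)
  then show ?case by (cases L; cases R) auto
qed

lemma dnz_lopts: "dnz H \<Longrightarrow> g \<in> set (lopts H) \<Longrightarrow> dnz g"
  by (erule dnz_cases) auto

lemma dnz_ropts: "dnz H \<Longrightarrow> g \<in> set (ropts H) \<Longrightarrow> dnz g"
  by (erule dnz_cases) auto

lemma dnz_opts_ne: "dnz H \<Longrightarrow> \<not> is_num H \<Longrightarrow> lopts H \<noteq> [] \<and> ropts H \<noteq> []"
  by (erule dnz_cases) auto

lemma wf_position: "position G H \<Longrightarrow> wf_sg G \<Longrightarrow> wf_sg H"
  by (induction rule: position.induct) auto

lemma dnz_if_position:
  assumes "wf_sg G" "dicotic G" "nonzugzwang G" "terminals_are_numbers G"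
  shows "position G H \<Longrightarrow> dnz H"
proof (induction H)
  case (SG L R)
  have wf: "wf_sg (SG L R)"
    using SG.prems \<open>wf_sg G\<close> by (rule wf_position)
  have dic: "(\<exists>a. L = Emp a) \<longleftrightarrow> (\<exists>b. R = Emp b)"
    using assms(2) SG.prems unfolding dicotic_def by blast
  show ?case
  proof (cases L; cases R)
    fix a b assume "L = Emp a" "R = Emp b"
    then show ?thesis using assms(4) SG.prems unfolding terminals_are_numbers_def by auto
  next
    fix ls rs assume L: "L = Opts ls" and R: "R = Opts rs"
    have "dnz g" if "g \<in> set ls" for g
      using SG.IH[of g] that position.left[of G ls R g] SG.prems L by auto
    moreover have "dnz g" if "g \<in> set rs" for g
      using SG.IH[of g] that position.right[of G L rs g] SG.prems R by auto
    moreover have "Rs (SG L R) \<le> Ls (SG L R)"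
      using assms(3) SG.prems unfolding nonzugzwang_def by blast
    ultimately show ?thesis using wf L R by auto
  qed (use dic in auto)
qed

section \<open>Disjunctive sums\<close>

fun shift :: "sg \<Rightarrow> real \<Rightarrow> sg" where
  "shift (SG L R) c =
     SG (case L of Emp a \<Rightarrow> Emp (a + c) | Opts ls \<Rightarrow> Opts (map (\<lambda>g. shift g c) ls))
        (case R of Emp a \<Rightarrow> Emp (a + c) | Opts rs \<Rightarrow> Opts (map (\<lambda>g. shift g c) rs))"

lemma shift_num [simp]: "shift (num a) c = num (a + c)"
  by (simp add: num_def)

lemma shift_scores: "wf_sg X \<Longrightarrow> Ls (shift X c) = Ls X + c \<and> Rs (shift X c) = Rs X + c"
proof (induction X)
  case (SG L R)
  have Ls_shift: "Ls (shift g c) = Ls g + c" and Rs_shift: "Rs (shift g c) = Rs g + c"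
    if "g \<in> set_side L \<union> set_side R" for g
    using SG that by (cases L; cases R; auto)+
  show ?case
    using SG.prems
    by (cases L; cases R)
       (auto simp: Ls_Opts Rs_Opts Ls_Emp Rs_Emp image_image Ls_shift Rs_shift
         Max_add_commute Min_add_commute cong: image_cong)
qed

lemma dnz_shift: "dnz X \<Longrightarrow> dnz (shift X c)"
proof (induction X)
  case (SG L R)
  have "Rs (shift (SG L R) c) \<le> Ls (shift (SG L R) c)"
    using shift_scores[OF dnz_wf[OF SG.prems]] dnz_nonzugzwang[OF SG.prems] by simp
  with SG show ?case by (cases L; cases R) auto
qed

lemma plus_num: "plus_sg X (num c) = shift X c"
  by (induction X) (auto simp: num_def split: side.split)

lemma num_plus: "plus_sg (num c) X = shift X c"
  by (induction X) (auto simp: num_def add.commute split: side.split)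

lemma plus_shift_left: "plus_sg (shift A c) B = shift (plus_sg A B) c"
  by (induction A B rule: plus_sg.induct) (auto simp: algebra_simps split: side.split)

lemma plus_shift_right: "plus_sg A (shift B c) = shift (plus_sg A B) c"
  by (induction A B rule: plus_sg.induct) (auto simp: algebra_simps split: side.split)

lemma lopts_plus: "lopts (plus_sg A B) = map (\<lambda>a. plus_sg a B) (lopts A) @ map (plus_sg A) (lopts B)"
  by (cases A; cases B) (auto split: side.split)

lemma ropts_plus: "ropts (plus_sg A B) = map (\<lambda>a. plus_sg a B) (ropts A) @ map (plus_sg A) (ropts B)"
  by (cases A; cases B) (auto split: side.split)

lemma scores_num_plus: "wf_sg B \<Longrightarrow> Ls (plus_sg (num a) B) = a + Ls B \<and> Rs (plus_sg (num a) B) = a + Rs B"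
  by (simp add: num_plus shift_scores)

lemma scores_plus_num: "wf_sg A \<Longrightarrow> Ls (plus_sg A (num b)) = Ls A + b \<and> Rs (plus_sg A (num b)) = Rs A + b"
  by (simp add: plus_num shift_scores)

lemma scores_plus_sg_lower_bounds:
  assumes "dnz A" "dnz B"
  shows "Rs A + Rs B \<le> Rs (plus_sg A B) \<and> Ls A + Rs B \<le> Ls (plus_sg A B) \<and> Rs A + Ls B \<le> Ls (plus_sg A B)"
  using assms
proof (induction "size A + size B" arbitrary: A B rule: less_induct)
  case less
  note A = less.prems(1) and B = less.prems(2)
  consider (numA) a where "A = num a" | (numB) b where "B = num b" | (games) "\<not> is_num A" "\<not> is_num B"
    by (auto simp: is_num_def)
  then show ?case
  proof cases
    case numA
    then show ?thesis using dnz_nonzugzwang[OF B] scores_num_plus[OF dnz_wf[OF B], of a] by simp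
  next
    case numB
    then show ?thesis using dnz_nonzugzwang[OF A] scores_plus_num[OF dnz_wf[OF A], of b] by simp
  next
    case games
    have IH_A: "Ls a + Rs B \<le> Ls (plus_sg a B) \<and> Rs a + Rs B \<le> Rs (plus_sg a B)"
      if "a \<in> set (lopts A) \<union> set (ropts A)" for a
      using less.hyps[OF _ _ B, of a] that size_lopts size_ropts dnz_lopts[OF A] dnz_ropts[OF A] by force
    have IH_B: "Rs A + Ls b \<le> Ls (plus_sg A b) \<and> Rs A + Rs b \<le> Rs (plus_sg A b)"
      if "b \<in> set (lopts B) \<union> set (ropts B)" for b
      using less.hyps[OF _ A, of b] that size_lopts size_ropts dnz_lopts[OF B] dnz_ropts[OF B] by force
    obtain a where a: "a \<in> set (lopts A)" "Rs a = Ls A"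
      using Ls_attained dnz_opts_ne[OF A games(1)] by blast
    obtain b where b: "b \<in> set (lopts B)" "Rs b = Ls B"
      using Ls_attained dnz_opts_ne[OF B games(2)] by blast
    have "Rs A + Rs B \<le> Ls (plus_sg a B)" if "a \<in> set (ropts A)" for a
      using IH_A[of a] Rs_le_Ls_ropt[OF that] that by fastforce
    moreover have "Rs A + Rs B \<le> Ls (plus_sg A b)" if "b \<in> set (ropts B)" for b
      using IH_B[of b] Rs_le_Ls_ropt[OF that] that by fastforce
    ultimately have "Rs A + Rs B \<le> Rs (plus_sg A B)"
      using dnz_opts_ne[OF A games(1)] by (auto simp: ge_Rs_iff ropts_plus)
    moreover have "Rs (plus_sg a B) \<le> Ls (plus_sg A B)" "Rs (plus_sg A b) \<le> Ls (plus_sg A B)"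
      using a(1) b(1) by (auto intro: Rs_lopt_le simp: lopts_plus)
    then have "Ls A + Rs B \<le> Ls (plus_sg A B)" "Rs A + Ls B \<le> Ls (plus_sg A B)"
      using IH_A[of a] IH_B[of b] a b by auto
    ultimately show ?thesis by blast
  qed
qed

lemma scores_plus_sg_upper_bounds:
  assumes "dnz A" "dnz B"
  shows "Ls (plus_sg A B) \<le> Ls A + Ls B \<and> Rs (plus_sg A B) \<le> Rs A + Ls B \<and> Rs (plus_sg A B) \<le> Ls A + Rs B"
  using assms
proof (induction "size A + size B" arbitrary: A B rule: less_induct)
  case less
  note A = less.prems(1) and B = less.prems(2)
  consider (numA) a where "A = num a" | (numB) b where "B = num b" | (games) "\<not> is_num A" "\<not> is_num B"
    by (auto simp: is_num_def)
  then show ?case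
  proof cases
    case numA
    then show ?thesis using dnz_nonzugzwang[OF B] scores_num_plus[OF dnz_wf[OF B], of a] by simp
  next
    case numB
    then show ?thesis using dnz_nonzugzwang[OF A] scores_plus_num[OF dnz_wf[OF A], of b] by simp
  next
    case games
    have IH_A: "Ls (plus_sg a B) \<le> Ls a + Ls B \<and> Rs (plus_sg a B) \<le> Rs a + Ls B"
      if "a \<in> set (lopts A) \<union> set (ropts A)" for a
      using less.hyps[OF _ _ B, of a] that size_lopts size_ropts dnz_lopts[OF A] dnz_ropts[OF A] by force
    have IH_B: "Ls (plus_sg A b) \<le> Ls A + Ls b \<and> Rs (plus_sg A b) \<le> Ls A + Rs b"
      if "b \<in> set (lopts B) \<union> set (ropts B)" for b
      using less.hyps[OF _ A, of b] that size_lopts size_ropts dnz_lopts[OF B] dnz_ropts[OF B] by force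
    obtain a where a: "a \<in> set (ropts A)" "Ls a = Rs A"
      using Rs_attained dnz_opts_ne[OF A games(1)] by blast
    obtain b where b: "b \<in> set (ropts B)" "Ls b = Rs B"
      using Rs_attained dnz_opts_ne[OF B games(2)] by blast
    have "Rs (plus_sg a B) \<le> Ls A + Ls B" if "a \<in> set (lopts A)" for a
      using IH_A[of a] Rs_lopt_le[OF that] that by fastforce
    moreover have "Rs (plus_sg A b) \<le> Ls A + Ls B" if "b \<in> set (lopts B)" for b
      using IH_B[of b] Rs_lopt_le[OF that] that by fastforce
    ultimately have "Ls (plus_sg A B) \<le> Ls A + Ls B"
      using dnz_opts_ne[OF A games(1)] by (auto simp: Ls_le_iff lopts_plus)
    moreover have "Rs (plus_sg A B) \<le> Ls (plus_sg a B)" "Rs (plus_sg A B) \<le> Ls (plus_sg A b)"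
      using a(1) b(1) by (auto intro: Rs_le_Ls_ropt simp: ropts_plus)
    then have "Rs (plus_sg A B) \<le> Rs A + Ls B" "Rs (plus_sg A B) \<le> Ls A + Rs B"
      using IH_A[of a] IH_B[of b] a b by auto
    ultimately show ?thesis by blast
  qed
qed

lemma dnz_plus: "dnz A \<Longrightarrow> dnz B \<Longrightarrow> dnz (plus_sg A B)"
proof (induction "size A + size B" arbitrary: A B rule: less_induct)
  case less
  consider (numA) a where "A = num a" | (numB) b where "B = num b" | (games) "\<not> is_num A" "\<not> is_num B"
    by (auto simp: is_num_def)
  then show ?case
  proof cases
    case numA
    then show ?thesis using less.prems by (simp add: num_plus dnz_shift)
  next
    case numB
    then show ?thesis using less.prems by (simp add: plus_num dnz_shift)
  next
    case games
    from less.prems(1) games(1) obtain ls rs where A: "A = SG (Opts ls) (Opts rs)"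
      by (cases rule: dnz_cases) auto
    from less.prems(2) games(2) obtain ls' rs' where B: "B = SG (Opts ls') (Opts rs')"
      by (cases rule: dnz_cases) auto
    let ?S = "plus_sg A B"
    have S: "?S = SG (Opts (lopts ?S)) (Opts (ropts ?S))"
      by (simp add: A B)
    have "dnz a" "size a < size A" if "a \<in> set (lopts A) \<union> set (ropts A)" for a
      using that less.prems(1) dnz_lopts dnz_ropts size_lopts size_ropts by blast+
    moreover have "dnz b" "size b < size B" if "b \<in> set (lopts B) \<union> set (ropts B)" for b
      using that less.prems(2) dnz_lopts dnz_ropts size_lopts size_ropts by blast+
    ultimately have "dnz g" if "g \<in> set (lopts ?S) \<union> set (ropts ?S)" for g
      using that less.hyps less.prems by (auto simp: lopts_plus ropts_plus)
    moreover have "lopts ?S \<noteq> []" "ropts ?S \<noteq> []"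
      using games less.prems dnz_opts_ne by (auto simp: lopts_plus ropts_plus)
    moreover have "Rs ?S \<le> Ls ?S"
      using scores_plus_sg_lower_bounds[OF less.prems] scores_plus_sg_upper_bounds[OF less.prems] by linarith
    ultimately show ?thesis
      by (subst S) (simp only: dnz.simps, metis S Un_iff)
  qed
qed

section \<open>Sums of lists of games\<close>

definition sum_sg :: "sg list \<Rightarrow> sg" where
  "sum_sg xs = foldr plus_sg xs (num 0)"

lemma sum_sg_Nil [simp]: "sum_sg [] = num 0"
  and sum_sg_Cons [simp]: "sum_sg (x # xs) = plus_sg x (sum_sg xs)"
  by (simp_all add: sum_sg_def)

lemma times_sg_eq_sum_sg: "times_sg n G = sum_sg (replicate n G)"
  by (induction n) auto

lemma dnz_sum_sg: "list_all dnz xs \<Longrightarrow> dnz (sum_sg xs)"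
  by (induction xs) (auto intro: dnz_plus)

lemma sum_sg_numbers: "list_all is_num xs \<Longrightarrow> sum_sg xs = num (\<Sum>x\<leftarrow>xs. Ls x)"
proof (induction xs)
  case (Cons x xs)
  then obtain a where "x = num a" by (auto simp: is_num_def)
  with Cons show ?case by (simp add: num_plus add.commute)
qed simp

lemma sum_sg_bounds:
  "list_all dnz xs \<Longrightarrow> (\<Sum>x\<leftarrow>xs. Rs x) \<le> Ls (sum_sg xs) \<and> Rs (sum_sg xs) \<le> (\<Sum>x\<leftarrow>xs. Ls x)"
proof (induction xs)
  case (Cons x xs)
  then have "dnz x" "dnz (sum_sg xs)" by (auto intro: dnz_sum_sg)
  from scores_plus_sg_lower_bounds[OF this] scores_plus_sg_upper_bounds[OF this] Cons show ?case by auto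
qed simp

lemma sum_sg_update_shift:
  "i < length xs \<Longrightarrow> sum_sg (xs[i := shift (xs ! i) c]) = shift (sum_sg xs) c"
proof (induction xs arbitrary: i)
  case (Cons x xs)
  then show ?case by (cases i) (auto simp: plus_shift_left plus_shift_right)
qed simp

definition lmove :: "sg list \<Rightarrow> sg list \<Rightarrow> bool" where
  "lmove xs ys \<longleftrightarrow> (\<exists>i<length xs. \<exists>g\<in>set (lopts (xs ! i)). ys = xs[i := g])"

definition rmove :: "sg list \<Rightarrow> sg list \<Rightarrow> bool" where
  "rmove xs ys \<longleftrightarrow> (\<exists>i<length xs. \<exists>g\<in>set (ropts (xs ! i)). ys = xs[i := g])"

lemma lmove_Cons:
  "lmove (x # xs) ys \<longleftrightarrow> (\<exists>g\<in>set (lopts x). ys = g # xs) \<or> (\<exists>ys'. lmove xs ys' \<and> ys = x # ys')"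
proof
  assume "lmove (x # xs) ys"
  then obtain i g where "i < Suc (length xs)" "g \<in> set (lopts ((x # xs) ! i))" "ys = (x # xs)[i := g]"
    by (auto simp: lmove_def)
  then show "(\<exists>g\<in>set (lopts x). ys = g # xs) \<or> (\<exists>ys'. lmove xs ys' \<and> ys = x # ys')"
    by (cases i) (auto simp: lmove_def)
next
  assume "(\<exists>g\<in>set (lopts x). ys = g # xs) \<or> (\<exists>ys'. lmove xs ys' \<and> ys = x # ys')"
  then show "lmove (x # xs) ys"
  proof (elim disjE exE conjE bexE)
    fix g assume "g \<in> set (lopts x)" "ys = g # xs"
    then show ?thesis unfolding lmove_def by (intro exI[of _ 0]) auto
  next
    fix ys' assume "lmove xs ys'" "ys = x # ys'"
    then obtain i g where "i < length xs" "g \<in> set (lopts (xs ! i))" "ys = x # xs[i := g]"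
      by (auto simp: lmove_def)
    then show ?thesis unfolding lmove_def by (intro exI[of _ "Suc i"]) auto
  qed
qed

lemma rmove_Cons:
  "rmove (x # xs) ys \<longleftrightarrow> (\<exists>g\<in>set (ropts x). ys = g # xs) \<or> (\<exists>ys'. rmove xs ys' \<and> ys = x # ys')"
proof
  assume "rmove (x # xs) ys"
  then obtain i g where "i < Suc (length xs)" "g \<in> set (ropts ((x # xs) ! i))" "ys = (x # xs)[i := g]"
    by (auto simp: rmove_def)
  then show "(\<exists>g\<in>set (ropts x). ys = g # xs) \<or> (\<exists>ys'. rmove xs ys' \<and> ys = x # ys')"
    by (cases i) (auto simp: rmove_def)
next
  assume "(\<exists>g\<in>set (ropts x). ys = g # xs) \<or> (\<exists>ys'. rmove xs ys' \<and> ys = x # ys')"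
  then show "rmove (x # xs) ys"
  proof (elim disjE exE conjE bexE)
    fix g assume "g \<in> set (ropts x)" "ys = g # xs"
    then show ?thesis unfolding rmove_def by (intro exI[of _ 0]) auto
  next
    fix ys' assume "rmove xs ys'" "ys = x # ys'"
    then obtain i g where "i < length xs" "g \<in> set (ropts (xs ! i))" "ys = x # xs[i := g]"
      by (auto simp: rmove_def)
    then show ?thesis unfolding rmove_def by (intro exI[of _ "Suc i"]) auto
  qed
qed

lemma lopts_sum_sg: "set (lopts (sum_sg xs)) = sum_sg ` {ys. lmove xs ys}"
proof (induction xs)
  case (Cons x xs)
  have "{ys. lmove (x # xs) ys} = (\<lambda>g. g # xs) ` set (lopts x) \<union> Cons x ` {ys. lmove xs ys}"
    by (auto simp: lmove_Cons)
  then show ?case by (simp add: lopts_plus image_Un image_image Cons.IH)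
qed (simp add: lmove_def)

lemma ropts_sum_sg: "set (ropts (sum_sg xs)) = sum_sg ` {ys. rmove xs ys}"
proof (induction xs)
  case (Cons x xs)
  have "{ys. rmove (x # xs) ys} = (\<lambda>g. g # xs) ` set (ropts x) \<union> Cons x ` {ys. rmove xs ys}"
    by (auto simp: rmove_Cons)
  then show ?case by (simp add: ropts_plus image_Un image_image Cons.IH)
qed (simp add: rmove_def)

lemma Rs_lmove_le: "lmove xs ys \<Longrightarrow> Rs (sum_sg ys) \<le> Ls (sum_sg xs)"
  by (rule Rs_lopt_le) (simp add: lopts_sum_sg)

lemma Rs_le_Ls_rmove: "rmove xs ys \<Longrightarrow> Rs (sum_sg xs) \<le> Ls (sum_sg ys)"
  by (rule Rs_le_Ls_ropt) (simp add: ropts_sum_sg)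

lemma lmove_rmove_exist:
  assumes "list_all dnz xs" "\<not> list_all is_num xs"
  shows "\<exists>ys. lmove xs ys" "\<exists>ys. rmove xs ys"
proof -
  obtain i where i: "i < length xs" "\<not> is_num (xs ! i)"
    using assms(2) by (auto simp: list_all_length)
  then have "lopts (xs ! i) \<noteq> []" "ropts (xs ! i) \<noteq> []"
    using assms(1) dnz_opts_ne by (auto simp: list_all_length)
  with i show "\<exists>ys. lmove xs ys" "\<exists>ys. rmove xs ys"
    unfolding lmove_def rmove_def by (metis last_in_set)+
qed

lemma Ls_sum_sg_le_iff:
  assumes "list_all dnz xs" "\<not> list_all is_num xs"
  shows "Ls (sum_sg xs) \<le> c \<longleftrightarrow> (\<forall>ys. lmove xs ys \<longrightarrow> Rs (sum_sg ys) \<le> c)"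
proof -
  have "lopts (sum_sg xs) \<noteq> []"
    using lmove_rmove_exist(1)[OF assms] lopts_sum_sg[of xs] by auto
  then show ?thesis by (auto simp: Ls_le_iff lopts_sum_sg)
qed

lemma ge_Rs_sum_sg_iff:
  assumes "list_all dnz xs" "\<not> list_all is_num xs"
  shows "c \<le> Rs (sum_sg xs) \<longleftrightarrow> (\<forall>ys. rmove xs ys \<longrightarrow> c \<le> Ls (sum_sg ys))"
proof -
  have "ropts (sum_sg xs) \<noteq> []"
    using lmove_rmove_exist(2)[OF assms] ropts_sum_sg[of xs] by auto
  then show ?thesis by (auto simp: ge_Rs_iff ropts_sum_sg)
qed

lemma lmove_size: "lmove xs ys \<Longrightarrow> (\<Sum>y\<leftarrow>ys. size y) < (\<Sum>x\<leftarrow>xs. size x)"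
  unfolding lmove_def using sum_list_size_update size_lopts by blast

lemma rmove_size: "rmove xs ys \<Longrightarrow> (\<Sum>y\<leftarrow>ys. size y) < (\<Sum>x\<leftarrow>xs. size x)"
  unfolding rmove_def using sum_list_size_update size_ropts by blast

lemma lmove_dnz: "lmove xs ys \<Longrightarrow> list_all dnz xs \<Longrightarrow> list_all dnz ys"
  unfolding lmove_def by (metis list_all_update dnz_lopts list_all_length)

lemma rmove_dnz: "rmove xs ys \<Longrightarrow> list_all dnz xs \<Longrightarrow> list_all dnz ys"
  unfolding rmove_def by (metis list_all_update dnz_ropts list_all_length)

lemma lmove_mset:
  assumes "mset xs = mset ys" "lmove xs xs'"
  shows "\<exists>ys'. lmove ys ys' \<and> mset xs' = mset ys'"
proof -
  obtain i g where i: "i < length xs" "g \<in> set (lopts (xs ! i))" "xs' = xs[i := g]"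
    using assms(2) unfolding lmove_def by blast
  have "xs ! i \<in> set ys" using assms(1) i(1) by (metis nth_mem set_mset_mset)
  then obtain j where j: "j < length ys" "ys ! j = xs ! i" by (auto simp: in_set_conv_nth)
  have "lmove ys (ys[j := g])" unfolding lmove_def using i j by (intro exI[of _ j]) auto
  moreover have "mset xs' = mset (ys[j := g])" using assms(1) i j by (simp add: mset_update)
  ultimately show ?thesis by blast
qed

lemma rmove_mset:
  assumes "mset xs = mset ys" "rmove xs xs'"
  shows "\<exists>ys'. rmove ys ys' \<and> mset xs' = mset ys'"
proof -
  obtain i g where i: "i < length xs" "g \<in> set (ropts (xs ! i))" "xs' = xs[i := g]"
    using assms(2) unfolding rmove_def by blast
  have "xs ! i \<in> set ys" using assms(1) i(1) by (metis nth_mem set_mset_mset)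
  then obtain j where j: "j < length ys" "ys ! j = xs ! i" by (auto simp: in_set_conv_nth)
  have "rmove ys (ys[j := g])" unfolding rmove_def using i j by (intro exI[of _ j]) auto
  moreover have "mset xs' = mset (ys[j := g])" using assms(1) i j by (simp add: mset_update)
  ultimately show ?thesis by blast
qed

lemma scores_sum_sg_mset:
  assumes "mset xs = mset ys" "list_all dnz xs"
  shows "Ls (sum_sg xs) = Ls (sum_sg ys) \<and> Rs (sum_sg xs) = Rs (sum_sg ys)"
  using assms
proof (induction "\<Sum>x\<leftarrow>xs. size x" arbitrary: xs ys rule: less_induct)
  case less
  have half: "Ls (sum_sg a) \<le> Ls (sum_sg b) \<and> Rs (sum_sg b) \<le> Rs (sum_sg a)"
    if ab: "mset a = mset b" "list_all dnz a" "(\<Sum>x\<leftarrow>a. size x) = (\<Sum>x\<leftarrow>xs. size x)" for a b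
  proof (cases "list_all is_num a")
    case True
    then have "list_all is_num b" using ab(1) list_all_mset by blast
    with True show ?thesis using ab(1) by (simp add: sum_sg_numbers sum_list_map_mset[of a b])
  next
    case False
    have "Rs (sum_sg a') \<le> Ls (sum_sg b)" if mv: "lmove a a'" for a'
    proof -
      obtain b' where b': "lmove b b'" "mset a' = mset b'" using lmove_mset[OF ab(1) mv] by blast
      have "Rs (sum_sg a') = Rs (sum_sg b')"
        using less.hyps[OF _ b'(2) lmove_dnz[OF mv ab(2)]] lmove_size[OF mv] ab(3) by simp
      with Rs_lmove_le[OF b'(1)] show ?thesis by simp
    qed
    moreover have "Rs (sum_sg b) \<le> Ls (sum_sg a')" if mv: "rmove a a'" for a'
    proof -
      obtain b' where b': "rmove b b'" "mset a' = mset b'" using rmove_mset[OF ab(1) mv] by blast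
      have "Ls (sum_sg a') = Ls (sum_sg b')"
        using less.hyps[OF _ b'(2) rmove_dnz[OF mv ab(2)]] rmove_size[OF mv] ab(3) by simp
      with Rs_le_Ls_rmove[OF b'(1)] show ?thesis by simp
    qed
    ultimately show ?thesis
      using Ls_sum_sg_le_iff[OF ab(2) False] ge_Rs_sum_sg_iff[OF ab(2) False] by blast
  qed
  have "list_all dnz ys" "(\<Sum>x\<leftarrow>ys. size x) = (\<Sum>x\<leftarrow>xs. size x)"
    using less.prems list_all_mset sum_list_map_mset by metis+
  with half[OF less.prems refl] half[OF less.prems(1)[symmetric]] show ?case by auto
qed

lemma scores_sum_sg_update:
  assumes "list_all dnz xs" "j < length xs" "dnz K"
  shows "Ls (sum_sg (xs[j := K])) = Ls (plus_sg K (sum_sg (remove1 (xs ! j) xs))) \<and>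
    Rs (sum_sg (xs[j := K])) = Rs (plus_sg K (sum_sg (remove1 (xs ! j) xs)))"
proof -
  have "mset (xs[j := K]) = mset (K # remove1 (xs ! j) xs)"
    using assms(2) by (simp add: mset_update)
  from scores_sum_sg_mset[OF this list_all_update[OF assms(1,3)]] show ?thesis by simp
qed

section \<open>Cooling and thermographs\<close>

lemma cool_eq:
  "cool H u = (if is_num H then H else if u \<le> temperature H then cool_tilde H u
     else num (Ls (cool_tilde H (temperature H))))"
  by (cases H) (simp add: temperature_def Let_def)

declare cool.simps [simp del]

definition mast :: "sg \<Rightarrow> real" where
  "mast H = Ls (cool H (temperature H))"

lemma cool_is_num: "is_num H \<Longrightarrow> cool H u = H"
  by (simp add: cool_eq)

lemma cool_num [simp]: "cool (num a) u = num a"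
  by (simp add: cool_is_num)

lemma temperature_is_num: "is_num H \<Longrightarrow> temperature H = 0"
  by (simp add: temperature_def)

lemma cool_below_temperature: "\<not> is_num H \<Longrightarrow> u \<le> temperature H \<Longrightarrow> cool H u = cool_tilde H u"
  by (simp add: cool_eq)

lemma cool_above_temperature: "temperature H < u \<Longrightarrow> cool H u = num (mast H)"
  by (cases "is_num H") (auto simp: mast_def cool_eq[of H] is_num_def)

lemma lopts_cool:
  "set (lopts (cool H u)) = (if u \<le> temperature H then (\<lambda>x. shift (cool x u) (- u)) ` set (lopts H) else {})"
proof (cases "is_num H \<or> temperature H < u")
  case True
  then show ?thesis by (auto simp: cool_is_num cool_above_temperature is_num_def)
next
  case False
  then have "cool H u = cool_tilde H u" by (simp add: cool_below_temperature)
  with False show ?thesis by (cases H rule: lopts.cases) (auto simp: plus_num)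
qed

lemma ropts_cool:
  "set (ropts (cool H u)) = (if u \<le> temperature H then (\<lambda>y. shift (cool y u) u) ` set (ropts H) else {})"
proof (cases "is_num H \<or> temperature H < u")
  case True
  then show ?thesis by (auto simp: cool_is_num cool_above_temperature is_num_def)
next
  case False
  then have "cool H u = cool_tilde H u" by (simp add: cool_below_temperature)
  with False show ?thesis by (cases H rule: ropts.cases) (auto simp: plus_num)
qed

lemma scores_cool_tilde:
  assumes "\<And>g. g \<in> set ls \<union> set rs \<Longrightarrow> wf_sg (cool g u)"
  shows "Ls (cool_tilde (SG (Opts ls) (Opts rs)) u) = Max ((\<lambda>x. Rs (cool x u) - u) ` set ls) \<and>
    Rs (cool_tilde (SG (Opts ls) (Opts rs)) u) = Min ((\<lambda>y. Ls (cool y u) + u) ` set rs)"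
proof -
  have "Rs (plus_sg (cool x u) (num (- u))) = Rs (cool x u) - u" if "x \<in> set ls" for x
    using assms that by (simp add: plus_num shift_scores)
  moreover have "Ls (plus_sg (cool y u) (num u)) = Ls (cool y u) + u" if "y \<in> set rs" for y
    using assms that by (simp add: plus_num shift_scores)
  ultimately show ?thesis by (simp add: Ls_Opts Rs_Opts image_image cong: image_cong)
qed

text \<open>\<open>Ls (cool H u)\<close> and \<open>Rs (cool H u)\<close> are the left and right walls of the thermograph of \<open>H\<close>.\<close>

definition well_cooled :: "sg \<Rightarrow> bool" where
  "well_cooled H \<longleftrightarrow> 0 \<le> temperature H \<and>
     Ls (cool H (temperature H)) = Rs (cool H (temperature H)) \<and>
     (\<forall>u\<ge>0. dnz (cool H u)) \<and>
     slopes_between (-1) 0 (\<lambda>u. Ls (cool H u)) \<and> slopes_between 0 1 (\<lambda>u. Rs (cool H u)) \<and>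
     Ls (cool H 0) = Ls H \<and> Rs (cool H 0) = Rs H"

lemma well_cooled_num: "well_cooled (num a)"
  by (simp add: well_cooled_def slopes_between_def cool_is_num temperature_is_num)

lemma well_cooled_mast:
  assumes "well_cooled H" "temperature H \<le> u"
  shows "Ls (cool H u) = mast H \<and> Rs (cool H u) = mast H"
  using assms by (cases "u = temperature H") (auto simp: well_cooled_def mast_def cool_above_temperature)

lemma well_cooled_mast_between:
  assumes "well_cooled H" "0 \<le> u"
  shows "Rs (cool H u) \<le> mast H \<and> mast H \<le> Ls (cool H u)"
proof (cases "u \<le> temperature H")
  case True
  with assms have "Ls (cool H (temperature H)) \<le> Ls (cool H u)" "Rs (cool H u) \<le> Rs (cool H (temperature H))"
    unfolding well_cooled_def using slopes_betweenD by fastforce+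
  then show ?thesis using well_cooled_mast[OF assms(1) order_refl] by simp
next
  case False
  then show ?thesis using well_cooled_mast[OF assms(1)] by simp
qed

lemma slopes_cool_tilde:
  assumes "ls \<noteq> []" "rs \<noteq> []" and opts: "\<And>g. g \<in> set ls \<union> set rs \<Longrightarrow> well_cooled g"
  shows "slopes_between (-1) 0 (\<lambda>u. Ls (cool_tilde (SG (Opts ls) (Opts rs)) u)) \<and>
    slopes_between 0 1 (\<lambda>u. Rs (cool_tilde (SG (Opts ls) (Opts rs)) u))"
proof -
  have "slopes_between (-1) 0 (\<lambda>u. Max ((\<lambda>x. Rs (cool x u) - u) ` set ls))"
    using assms slopes_between_diff_id[of 0 1] by (intro slopes_between_Max) (auto simp: well_cooled_def)
  moreover have "slopes_between 0 1 (\<lambda>u. Min ((\<lambda>y. Ls (cool y u) + u) ` set rs))"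
    using assms slopes_between_add_id[of "-1" 0] by (intro slopes_between_Min) (auto simp: well_cooled_def)
  moreover have "Ls (cool_tilde (SG (Opts ls) (Opts rs)) u) = Max ((\<lambda>x. Rs (cool x u) - u) ` set ls) \<and>
      Rs (cool_tilde (SG (Opts ls) (Opts rs)) u) = Min ((\<lambda>y. Ls (cool y u) + u) ` set rs)" if "0 \<le> u" for u
    using opts that by (intro scores_cool_tilde) (auto simp: well_cooled_def dnz_wf)
  ultimately show ?thesis by (auto cong: slopes_between_cong)
qed

lemma scores_cool_tilde_zero:
  assumes "\<And>g. g \<in> set ls \<union> set rs \<Longrightarrow> well_cooled g"
  shows "Ls (cool_tilde (SG (Opts ls) (Opts rs)) 0) = Ls (SG (Opts ls) (Opts rs)) \<and>
    Rs (cool_tilde (SG (Opts ls) (Opts rs)) 0) = Rs (SG (Opts ls) (Opts rs))"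
  using assms scores_cool_tilde[of ls rs 0]
  by (auto simp: Ls_Opts Rs_Opts well_cooled_def dnz_wf cong: image_cong)

lemma cool_tilde_eventually_cold:
  assumes "ls \<noteq> []" "rs \<noteq> []" and opts: "\<And>g. g \<in> set ls \<union> set rs \<Longrightarrow> well_cooled g"
  obtains b where "0 \<le> b" "Ls (cool_tilde (SG (Opts ls) (Opts rs)) b) \<le> Rs (cool_tilde (SG (Opts ls) (Opts rs)) b)"
proof
  define b where "b = max 0 (Max (mast ` set ls) - Min (mast ` set rs))"
  show "0 \<le> b" by (simp add: b_def)
  have "Rs (cool x b) - b \<le> Max (mast ` set ls) - b" if "x \<in> set ls" for x
  proof -
    have "Rs (cool x b) \<le> mast x" using well_cooled_mast_between[OF opts \<open>0 \<le> b\<close>, of x] that by auto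
    moreover have "mast x \<le> Max (mast ` set ls)" using that by (intro Max_ge) auto
    ultimately show ?thesis by linarith
  qed
  moreover have "Min (mast ` set rs) + b \<le> Ls (cool y b) + b" if "y \<in> set rs" for y
  proof -
    have "mast y \<le> Ls (cool y b)" using well_cooled_mast_between[OF opts \<open>0 \<le> b\<close>, of y] that by auto
    moreover have "Min (mast ` set rs) \<le> mast y" using that by (intro Min_le) auto
    ultimately show ?thesis by linarith
  qed
  moreover have "Ls (cool_tilde (SG (Opts ls) (Opts rs)) b) = Max ((\<lambda>x. Rs (cool x b) - b) ` set ls) \<and>
      Rs (cool_tilde (SG (Opts ls) (Opts rs)) b) = Min ((\<lambda>y. Ls (cool y b) + b) ` set rs)"
    using opts \<open>0 \<le> b\<close> by (intro scores_cool_tilde) (auto simp: well_cooled_def dnz_wf)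
  ultimately have "Ls (cool_tilde (SG (Opts ls) (Opts rs)) b) \<le> Max (mast ` set ls) - b"
    "Min (mast ` set rs) + b \<le> Rs (cool_tilde (SG (Opts ls) (Opts rs)) b)"
    using assms(1,2) by (simp_all add: Max_le_iff Min_ge_iff)
  then show "Ls (cool_tilde (SG (Opts ls) (Opts rs)) b) \<le> Rs (cool_tilde (SG (Opts ls) (Opts rs)) b)"
    unfolding b_def by linarith
qed

lemma dnz_cool_tilde:
  assumes "ls \<noteq> []" "rs \<noteq> []" "\<And>g. g \<in> set ls \<union> set rs \<Longrightarrow> well_cooled g" "0 \<le> u"
    and "Rs (cool_tilde (SG (Opts ls) (Opts rs)) u) \<le> Ls (cool_tilde (SG (Opts ls) (Opts rs)) u)"
  shows "dnz (cool_tilde (SG (Opts ls) (Opts rs)) u)"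
proof -
  have "dnz (plus_sg (cool g u) (num c))" if "g \<in> set ls \<union> set rs" for g c
    using assms(3)[OF that] assms(4) by (simp add: plus_num dnz_shift well_cooled_def)
  with assms show ?thesis by simp
qed

lemma well_cooled_SG:
  assumes H: "H = SG (Opts ls) (Opts rs)" and "dnz H"
    and opts: "\<And>g. g \<in> set ls \<union> set rs \<Longrightarrow> well_cooled g"
  shows "well_cooled H"
proof -
  have ne: "ls \<noteq> []" "rs \<noteq> []" and nz: "Rs H \<le> Ls H" and not_num: "\<not> is_num H"
    using \<open>dnz H\<close> by (auto simp: H is_num_SG)
  define D where "D = (\<lambda>u. Ls (cool_tilde H u) - Rs (cool_tilde H u))"
  have L: "slopes_between (-1) 0 (\<lambda>u. Ls (cool_tilde H u))" and R: "slopes_between 0 1 (\<lambda>u. Rs (cool_tilde H u))"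
    using slopes_cool_tilde[OF ne opts] by (simp_all add: H)
  have D: "slopes_between (-2) 0 D" using slopes_between_diff[OF L R] by (simp add: D_def)
  moreover have "0 \<le> D 0" using scores_cool_tilde_zero[OF opts] nz by (simp add: D_def H)
  moreover obtain b where "0 \<le> b" "D b \<le> 0"
    using cool_tilde_eventually_cold[OF ne opts] by (auto simp: D_def H)
  ultimately have t: "0 \<le> temperature H" "D (temperature H) = 0"
    using slopes_between_Inf_zeros[of "-2" D b] not_num by (simp_all add: temperature_def D_def)
  define t where "t = temperature H"
  have cool_H: "Ls (cool H u) = Ls (cool_tilde H (min u t)) \<and> Rs (cool H u) = Rs (cool_tilde H (min u t))"
    for u
    using t not_num cool_above_temperature[of H u]
    by (cases "u \<le> t") (simp_all add: t_def cool_below_temperature mast_def D_def)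
  have "dnz (cool H u)" if "0 \<le> u" for u
  proof (cases "u \<le> t")
    case True
    then have "0 \<le> D u" using slopes_betweenD[OF D that True] t by (simp add: t_def)
    with True show ?thesis using dnz_cool_tilde[OF ne opts that] not_num
      by (simp add: D_def H t_def cool_below_temperature)
  qed (simp add: t_def cool_above_temperature)
  moreover have "slopes_between (-1) 0 (\<lambda>u. Ls (cool H u))" "slopes_between 0 1 (\<lambda>u. Rs (cool H u))"
    using slopes_between_min[OF L _ _ t(1)] slopes_between_min[OF R _ _ t(1)] cool_H
    by (simp_all add: t_def)
  ultimately show ?thesis
    using t cool_H[of 0] cool_H[of t] scores_cool_tilde_zero[OF opts]
    by (simp add: well_cooled_def t_def D_def H)
qed

lemma dnz_well_cooled: "dnz H \<Longrightarrow> well_cooled H"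
proof (induction H)
  case (SG L R)
  from SG.prems show ?case
  proof (cases rule: dnz_cases)
    case (num a)
    then show ?thesis by (simp add: well_cooled_num)
  next
    case (game ls rs)
    then have "L = Opts ls" "R = Opts rs" by simp_all
    with game SG.IH show ?thesis by (intro well_cooled_SG[OF game(1) SG.prems]) auto
  qed
qed

lemma temperature_nonneg: "dnz H \<Longrightarrow> 0 \<le> temperature H"
  using dnz_well_cooled well_cooled_def by blast

lemma dnz_cool: "dnz H \<Longrightarrow> 0 \<le> u \<Longrightarrow> dnz (cool H u)"
  using dnz_well_cooled well_cooled_def by blast

lemma scores_cool_above_temperature:
  "dnz H \<Longrightarrow> temperature H \<le> u \<Longrightarrow> Ls (cool H u) = mast H \<and> Rs (cool H u) = mast H"
  using dnz_well_cooled well_cooled_mast by blast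

lemma is_num_cool:
  assumes "dnz H"
  shows "is_num (cool H u) \<longleftrightarrow> is_num H \<or> temperature H < u"
proof (cases "temperature H < u")
  case True
  then show ?thesis by (simp add: cool_above_temperature)
next
  case False
  from assms show ?thesis
  proof (cases rule: dnz_cases)
    case (game ls rs)
    then show ?thesis using False by (simp add: cool_below_temperature is_num_SG)
  qed simp
qed

lemma Rs_cool_lopt_le:
  assumes "dnz H" "x \<in> set (lopts H)" "0 \<le> u"
  shows "Rs (cool x u) - u \<le> Ls (cool H u)"
proof -
  have wall: "Rs (cool x v) - v \<le> Ls (cool H v)" if "0 \<le> v" "v \<le> temperature H" for v
  proof -
    have "shift (cool x v) (- v) \<in> set (lopts (cool H v))" using assms(2) that by (simp add: lopts_cool)
    with Rs_lopt_le have "Rs (shift (cool x v) (- v)) \<le> Ls (cool H v)" .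
    then show ?thesis
      using shift_scores[OF dnz_wf[OF dnz_cool[OF dnz_lopts[OF assms(1,2)] that(1)]]] by simp
  qed
  show ?thesis
  proof (cases "u \<le> temperature H")
    case True
    then show ?thesis using wall assms(3) by blast
  next
    case False
    let ?t = "temperature H"
    have "slopes_between 0 1 (\<lambda>v. Rs (cool x v))"
      using dnz_well_cooled[OF dnz_lopts[OF assms(1,2)]] by (simp add: well_cooled_def)
    from slopes_betweenD[OF this temperature_nonneg[OF assms(1)], of u] False
    have "Rs (cool x u) - Rs (cool x ?t) \<le> u - ?t" by simp
    moreover have "Ls (cool H ?t) = Ls (cool H u)"
      using scores_cool_above_temperature[OF assms(1)] False by simp
    ultimately show ?thesis using wall[OF temperature_nonneg[OF assms(1)] order_refl] by linarith
  qed
qed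

lemma Ls_cool_ropt_ge:
  assumes "dnz H" "y \<in> set (ropts H)" "0 \<le> u"
  shows "Rs (cool H u) \<le> Ls (cool y u) + u"
proof -
  have wall: "Rs (cool H v) \<le> Ls (cool y v) + v" if "0 \<le> v" "v \<le> temperature H" for v
  proof -
    have "shift (cool y v) v \<in> set (ropts (cool H v))" using assms(2) that by (simp add: ropts_cool)
    with Rs_le_Ls_ropt have "Rs (cool H v) \<le> Ls (shift (cool y v) v)" .
    then show ?thesis
      using shift_scores[OF dnz_wf[OF dnz_cool[OF dnz_ropts[OF assms(1,2)] that(1)]]] by simp
  qed
  show ?thesis
  proof (cases "u \<le> temperature H")
    case True
    then show ?thesis using wall assms(3) by blast
  next
    case False
    let ?t = "temperature H"
    have "slopes_between (-1) 0 (\<lambda>v. Ls (cool y v))"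
      using dnz_well_cooled[OF dnz_ropts[OF assms(1,2)]] by (simp add: well_cooled_def)
    from slopes_betweenD[OF this temperature_nonneg[OF assms(1)], of u] False
    have "Ls (cool y ?t) - Ls (cool y u) \<le> u - ?t" by simp
    moreover have "Rs (cool H ?t) = Rs (cool H u)"
      using scores_cool_above_temperature[OF assms(1)] False by simp
    ultimately show ?thesis using wall[OF temperature_nonneg[OF assms(1)] order_refl] by linarith
  qed
qed

section \<open>Cooling the summands of a sum\<close>

abbreviation cool_list :: "sg list \<Rightarrow> real \<Rightarrow> sg list" where
  "cool_list S u \<equiv> map (\<lambda>H. cool H u) S"

lemma dnz_cool_list: "list_all dnz S \<Longrightarrow> 0 \<le> u \<Longrightarrow> list_all dnz (cool_list S u)"
  by (simp add: list_all_iff dnz_cool)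

lemma cool_list_numbers: "list_all is_num S \<Longrightarrow> cool_list S u = S"
  by (induction S) (auto simp: cool_is_num)

lemma lmove_cool_list_iff:
  "lmove (cool_list S u) Y \<longleftrightarrow> (\<exists>j<length S. \<exists>x\<in>set (lopts (S ! j)).
     u \<le> temperature (S ! j) \<and> Y = (cool_list S u)[j := shift (cool x u) (- u)])"
proof
  assume "lmove (cool_list S u) Y"
  then obtain j g where "j < length S" "g \<in> set (lopts (cool (S ! j) u))" "Y = (cool_list S u)[j := g]"
    by (auto simp: lmove_def)
  then show "\<exists>j<length S. \<exists>x\<in>set (lopts (S ! j)).
      u \<le> temperature (S ! j) \<and> Y = (cool_list S u)[j := shift (cool x u) (- u)]"
    by (auto simp: lopts_cool split: if_splits)
next
  assume "\<exists>j<length S. \<exists>x\<in>set (lopts (S ! j)).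
      u \<le> temperature (S ! j) \<and> Y = (cool_list S u)[j := shift (cool x u) (- u)]"
  then obtain j x where "j < length S" "x \<in> set (lopts (S ! j))" "u \<le> temperature (S ! j)"
      "Y = (cool_list S u)[j := shift (cool x u) (- u)]"
    by blast
  then show "lmove (cool_list S u) Y"
    unfolding lmove_def by (intro exI[of _ j]) (auto simp: lopts_cool)
qed

lemma rmove_cool_list_iff:
  "rmove (cool_list S u) Y \<longleftrightarrow> (\<exists>j<length S. \<exists>y\<in>set (ropts (S ! j)).
     u \<le> temperature (S ! j) \<and> Y = (cool_list S u)[j := shift (cool y u) u])"
proof
  assume "rmove (cool_list S u) Y"
  then obtain j g where "j < length S" "g \<in> set (ropts (cool (S ! j) u))" "Y = (cool_list S u)[j := g]"
    by (auto simp: rmove_def)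
  then show "\<exists>j<length S. \<exists>y\<in>set (ropts (S ! j)).
      u \<le> temperature (S ! j) \<and> Y = (cool_list S u)[j := shift (cool y u) u]"
    by (auto simp: ropts_cool split: if_splits)
next
  assume "\<exists>j<length S. \<exists>y\<in>set (ropts (S ! j)).
      u \<le> temperature (S ! j) \<and> Y = (cool_list S u)[j := shift (cool y u) u]"
  then obtain j y where "j < length S" "y \<in> set (ropts (S ! j))" "u \<le> temperature (S ! j)"
      "Y = (cool_list S u)[j := shift (cool y u) u]"
    by blast
  then show "rmove (cool_list S u) Y"
    unfolding rmove_def by (intro exI[of _ j]) (auto simp: ropts_cool)
qed

lemma scores_sum_sg_cool_list_shift:
  assumes "list_all dnz (S[j := x])" "j < length S" "0 \<le> u"
  shows "Ls (sum_sg ((cool_list S u)[j := shift (cool x u) c])) = Ls (sum_sg (cool_list (S[j := x]) u)) + c \<and>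
    Rs (sum_sg ((cool_list S u)[j := shift (cool x u) c])) = Rs (sum_sg (cool_list (S[j := x]) u)) + c"
proof -
  have "(cool_list S u)[j := shift (cool x u) c] =
      (cool_list (S[j := x]) u)[j := shift (cool_list (S[j := x]) u ! j) c]"
    using assms(2) by (simp add: map_update)
  then have "sum_sg ((cool_list S u)[j := shift (cool x u) c]) = shift (sum_sg (cool_list (S[j := x]) u)) c"
    using assms(2) sum_sg_update_shift[of j "cool_list (S[j := x]) u" c] by simp
  moreover have "wf_sg (sum_sg (cool_list (S[j := x]) u))"
    using assms(1,3) by (intro dnz_wf dnz_sum_sg dnz_cool_list)
  ultimately show ?thesis by (simp add: shift_scores)
qed

lemma lmove_cool_list:
  assumes S: "list_all dnz S" and "0 \<le> u" "lmove (cool_list S u) Y"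
  obtains S' where "lmove S S'" "Rs (sum_sg Y) = Rs (sum_sg (cool_list S' u)) - u"
proof -
  obtain j x where j: "j < length S" "x \<in> set (lopts (S ! j))"
    and Y: "Y = (cool_list S u)[j := shift (cool x u) (- u)]"
    using assms(3) by (auto simp: lmove_cool_list_iff)
  have "lmove S (S[j := x])" using j by (auto simp: lmove_def)
  moreover have "list_all dnz (S[j := x])" using lmove_dnz[OF calculation S] .
  ultimately show ?thesis
    using that scores_sum_sg_cool_list_shift[OF _ j(1) assms(2)] Y by fastforce
qed

lemma rmove_cool_list:
  assumes S: "list_all dnz S" and "0 \<le> u" "rmove (cool_list S u) Y"
  obtains S' where "rmove S S'" "Ls (sum_sg Y) = Ls (sum_sg (cool_list S' u)) + u"
proof -
  obtain j y where j: "j < length S" "y \<in> set (ropts (S ! j))"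
    and Y: "Y = (cool_list S u)[j := shift (cool y u) u]"
    using assms(3) by (auto simp: rmove_cool_list_iff)
  have "rmove S (S[j := y])" using j by (auto simp: rmove_def)
  moreover have "list_all dnz (S[j := y])" using rmove_dnz[OF calculation S] .
  ultimately show ?thesis
    using that scores_sum_sg_cool_list_shift[OF _ j(1) assms(2)] Y by fastforce
qed

text \<open>A Left move in a summand that is still hot at \<open>u\<close> is available in the cooled sum, at the price
  \<open>u\<close>; a Left move in a summand that is already frozen is bounded by the left wall of that summand.\<close>

lemma lmove_wall:
  assumes S: "list_all dnz S" and u: "0 \<le> u" and "lmove S S'"
  shows "Rs (sum_sg (cool_list S' u)) - u \<le> Ls (sum_sg (cool_list S u))"
proof -
  obtain j x where j: "j < length S" "x \<in> set (lopts (S ! j))" and S': "S' = S[j := x]"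
    using assms(3) unfolding lmove_def by blast
  have dnz_j: "dnz (S ! j)" and dnz_x: "dnz (cool x u)"
    using S j dnz_lopts dnz_cool[OF _ u] by (auto simp: list_all_length)
  have C: "list_all dnz (cool_list S u)" using dnz_cool_list[OF S u] .
  show ?thesis
  proof (cases "u \<le> temperature (S ! j)")
    case True
    let ?Y = "(cool_list S u)[j := shift (cool x u) (- u)]"
    have "lmove (cool_list S u) ?Y" using j True by (auto simp: lmove_cool_list_iff)
    moreover have "Rs (sum_sg ?Y) = Rs (sum_sg (cool_list S' u)) - u"
      using scores_sum_sg_cool_list_shift[OF _ j(1) u] lmove_dnz[OF assms(3) S] S' by simp
    ultimately show ?thesis using Rs_lmove_le by fastforce
  next
    case False
    define m where "m = mast (S ! j)"
    have frozen: "cool_list S u ! j = num m" using False j(1) by (simp add: m_def cool_above_temperature)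
    define rest where "rest = sum_sg (remove1 (num m) (cool_list S u))"
    have "dnz rest" unfolding rest_def
      using C set_remove1_subset[of "num m" "cool_list S u"] by (intro dnz_sum_sg) (auto simp: list_all_iff)
    have "Rs (sum_sg (cool_list S' u)) = Rs (plus_sg (cool x u) rest)"
      using scores_sum_sg_update[OF C _ dnz_x, of j] j(1) frozen by (simp add: S' rest_def map_update)
    also have "\<dots> \<le> Rs (cool x u) + Ls rest"
      using scores_plus_sg_upper_bounds[OF dnz_x \<open>dnz rest\<close>] by linarith
    also have "\<dots> \<le> m + u + Ls rest"
      using Rs_cool_lopt_le[OF dnz_j j(2) u] frozen j(1) by simp
    also have "\<dots> = Ls (sum_sg (cool_list S u)) + u"
      using scores_sum_sg_update[OF C _ dnz_num[of m], of j] j(1) frozen list_update_id[of "cool_list S u" j, unfolded frozen]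
        shift_scores[OF dnz_wf[OF \<open>dnz rest\<close>]] by (simp add: rest_def num_plus)
    finally show ?thesis by simp
  qed
qed

lemma rmove_wall:
  assumes S: "list_all dnz S" and u: "0 \<le> u" and "rmove S S'"
  shows "Rs (sum_sg (cool_list S u)) \<le> Ls (sum_sg (cool_list S' u)) + u"
proof -
  obtain j y where j: "j < length S" "y \<in> set (ropts (S ! j))" and S': "S' = S[j := y]"
    using assms(3) unfolding rmove_def by blast
  have dnz_j: "dnz (S ! j)" and dnz_y: "dnz (cool y u)"
    using S j dnz_ropts dnz_cool[OF _ u] by (auto simp: list_all_length)
  have C: "list_all dnz (cool_list S u)" using dnz_cool_list[OF S u] .
  show ?thesis
  proof (cases "u \<le> temperature (S ! j)")
    case True
    let ?Y = "(cool_list S u)[j := shift (cool y u) u]"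
    have "rmove (cool_list S u) ?Y" using j True by (auto simp: rmove_cool_list_iff)
    moreover have "Ls (sum_sg ?Y) = Ls (sum_sg (cool_list S' u)) + u"
      using scores_sum_sg_cool_list_shift[OF _ j(1) u] rmove_dnz[OF assms(3) S] S' by simp
    ultimately show ?thesis using Rs_le_Ls_rmove by fastforce
  next
    case False
    define m where "m = mast (S ! j)"
    have frozen: "cool_list S u ! j = num m" using False j(1) by (simp add: m_def cool_above_temperature)
    define rest where "rest = sum_sg (remove1 (num m) (cool_list S u))"
    have "dnz rest" unfolding rest_def
      using C set_remove1_subset[of "num m" "cool_list S u"] by (intro dnz_sum_sg) (auto simp: list_all_iff)
    have "Rs (sum_sg (cool_list S u)) = m + Rs rest"
      using scores_sum_sg_update[OF C _ dnz_num[of m], of j] j(1) frozen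
        list_update_id[of "cool_list S u" j, unfolded frozen]
        shift_scores[OF dnz_wf[OF \<open>dnz rest\<close>]] by (simp add: rest_def num_plus)
    also have "\<dots> \<le> Ls (cool y u) + u + Rs rest"
      using Ls_cool_ropt_ge[OF dnz_j j(2) u] frozen j(1) by simp
    also have "\<dots> \<le> Ls (plus_sg (cool y u) rest) + u"
      using scores_plus_sg_lower_bounds[OF dnz_y \<open>dnz rest\<close>] by linarith
    also have "\<dots> = Ls (sum_sg (cool_list S' u)) + u"
      using scores_sum_sg_update[OF C _ dnz_y, of j] j(1) frozen by (simp add: S' rest_def map_update)
    finally show ?thesis .
  qed
qed

text \<open>When every summand is frozen at \<open>u\<close>, pass to the largest temperature \<open>v\<close> of a summand: there the
  cooled sum is not yet a number, but every summand already has both scores equal to its mast.\<close>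

lemma cool_list_frozen:
  assumes S: "list_all dnz S" and "\<not> list_all is_num S" "list_all is_num (cool_list S u)"
  obtains v where "0 \<le> v" "\<not> list_all is_num (cool_list S v)"
    "Ls (sum_sg (cool_list S u)) \<le> Ls (sum_sg (cool_list S v))"
    "Rs (sum_sg (cool_list S v)) \<le> Rs (sum_sg (cool_list S u))"
proof -
  define N where "N = {H \<in> set S. \<not> is_num H}"
  define v where "v = Max (temperature ` N)"
  have dnz_S: "dnz H" if "H \<in> set S" for H using S that by (simp add: list_all_iff)
  have "finite N" "N \<noteq> {}" using assms(2) by (auto simp: N_def list_all_iff)
  then have "v \<in> temperature ` N" unfolding v_def by (intro Max_in) auto
  then obtain H0 where H0: "H0 \<in> set S" "\<not> is_num H0" "temperature H0 = v"
    by (auto simp: N_def)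
  have "0 \<le> v" using temperature_nonneg[OF dnz_S[OF H0(1)]] H0(3) by simp
  have below_v: "temperature H \<le> v" if "H \<in> set S" for H
  proof (cases "is_num H")
    case True
    then show ?thesis using \<open>0 \<le> v\<close> by (simp add: temperature_is_num)
  next
    case False
    then show ?thesis using \<open>finite N\<close> that by (auto simp: v_def N_def)
  qed
  have "is_num (cool H0 u)" using assms(3) H0(1) by (simp add: list_all_iff)
  then have "v < u" using is_num_cool[OF dnz_S[OF H0(1)]] H0 by simp
  have "\<not> is_num (cool H0 v)" using is_num_cool[OF dnz_S[OF H0(1)]] H0 by simp
  then have "\<not> list_all is_num (cool_list S v)" using H0(1) by (auto simp: list_all_iff)
  moreover have mast_sums: "(\<Sum>H\<leftarrow>S. Ls (cool H w)) = (\<Sum>H\<leftarrow>S. mast H)"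
    "(\<Sum>H\<leftarrow>S. Rs (cool H w)) = (\<Sum>H\<leftarrow>S. mast H)" if "v \<le> w" for w
    using scores_cool_above_temperature dnz_S below_v order_trans[OF _ that]
    by (auto intro!: arg_cong[where f = sum_list] map_cong)
  moreover have "Ls (sum_sg (cool_list S u)) = (\<Sum>H\<leftarrow>S. mast H)"
    "Rs (sum_sg (cool_list S u)) = (\<Sum>H\<leftarrow>S. mast H)"
    using sum_sg_numbers[OF assms(3)] mast_sums[of u] \<open>v < u\<close> by (simp_all add: o_def)
  moreover have "(\<Sum>H\<leftarrow>S. mast H) \<le> Ls (sum_sg (cool_list S v))"
    "Rs (sum_sg (cool_list S v)) \<le> (\<Sum>H\<leftarrow>S. mast H)"
    using sum_sg_bounds[OF dnz_cool_list[OF S \<open>0 \<le> v\<close>]] mast_sums[of v] by (simp_all add: o_def)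
  ultimately show ?thesis using that \<open>0 \<le> v\<close> by simp
qed

lemma cool_list_hot_witness:
  assumes "list_all dnz S" "0 \<le> u"
  obtains v where "0 \<le> v" "\<not> list_all is_num (cool_list S v) \<or> list_all is_num S"
    "Ls (sum_sg (cool_list S u)) \<le> Ls (sum_sg (cool_list S v))"
    "Rs (sum_sg (cool_list S v)) \<le> Rs (sum_sg (cool_list S u))"
proof (cases "list_all is_num S \<or> \<not> list_all is_num (cool_list S u)")
  case True
  with that assms(2) show ?thesis by blast
next
  case False
  with cool_list_frozen[OF assms(1)] that show ?thesis by blast
qed

lemma cool_list_left_bounds:
  assumes "list_all dnz S" "0 \<le> u"
  shows "Ls (sum_sg (cool_list S u)) \<le> Ls (sum_sg S) \<and> Rs (sum_sg (cool_list S u)) \<le> Rs (sum_sg S) + u"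
  using assms
proof (induction "\<Sum>H\<leftarrow>S. size H" arbitrary: S u rule: less_induct)
  case less
  note S = less.prems(1)
  have hot: "Ls (sum_sg (cool_list S w)) \<le> Ls (sum_sg S)"
    if w: "0 \<le> w" "\<not> list_all is_num (cool_list S w)" for w
  proof -
    have "Rs (sum_sg Y) \<le> Ls (sum_sg S)" if mv: "lmove (cool_list S w) Y" for Y
    proof -
      obtain S' where S': "lmove S S'" "Rs (sum_sg Y) = Rs (sum_sg (cool_list S' w)) - w"
        using lmove_cool_list[OF S w(1) mv] by blast
      have "Rs (sum_sg (cool_list S' w)) \<le> Rs (sum_sg S') + w"
        using less.hyps[OF lmove_size[OF S'(1)] lmove_dnz[OF S'(1) S] w(1)] by blast
      with S'(2) Rs_lmove_le[OF S'(1)] show ?thesis by linarith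
    qed
    then show ?thesis using Ls_sum_sg_le_iff[OF dnz_cool_list[OF S w(1)] w(2)] by blast
  qed
  obtain v where v: "0 \<le> v" "\<not> list_all is_num (cool_list S v) \<or> list_all is_num S"
    "Ls (sum_sg (cool_list S u)) \<le> Ls (sum_sg (cool_list S v))"
    using cool_list_hot_witness[OF S less.prems(2)] by blast
  then have "Ls (sum_sg (cool_list S v)) \<le> Ls (sum_sg S)" using hot by (auto simp: cool_list_numbers)
  with v(3) have "Ls (sum_sg (cool_list S u)) \<le> Ls (sum_sg S)" by linarith
  moreover have "Rs (sum_sg (cool_list S u)) \<le> Rs (sum_sg S) + u"
  proof (cases "list_all is_num S")
    case True
    then show ?thesis using less.prems(2) by (simp add: cool_list_numbers)
  next
    case False
    have "Rs (sum_sg (cool_list S u)) - u \<le> Ls (sum_sg S')" if "rmove S S'" for S'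
      using rmove_wall[OF S less.prems(2) that]
        less.hyps[OF rmove_size[OF that] rmove_dnz[OF that S] less.prems(2)] by linarith
    then have "Rs (sum_sg (cool_list S u)) - u \<le> Rs (sum_sg S)" using ge_Rs_sum_sg_iff[OF S False] by blast
    then show ?thesis by simp
  qed
  ultimately show ?case ..
qed

lemma cool_list_right_bounds:
  assumes "list_all dnz S" "0 \<le> u"
  shows "Rs (sum_sg S) \<le> Rs (sum_sg (cool_list S u)) \<and> Ls (sum_sg S) \<le> Ls (sum_sg (cool_list S u)) + u"
  using assms
proof (induction "\<Sum>H\<leftarrow>S. size H" arbitrary: S u rule: less_induct)
  case less
  note S = less.prems(1)
  have hot: "Rs (sum_sg S) \<le> Rs (sum_sg (cool_list S w))"
    if w: "0 \<le> w" "\<not> list_all is_num (cool_list S w)" for w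
  proof -
    have "Rs (sum_sg S) \<le> Ls (sum_sg Y)" if mv: "rmove (cool_list S w) Y" for Y
    proof -
      obtain S' where S': "rmove S S'" "Ls (sum_sg Y) = Ls (sum_sg (cool_list S' w)) + w"
        using rmove_cool_list[OF S w(1) mv] by blast
      have "Ls (sum_sg S') \<le> Ls (sum_sg (cool_list S' w)) + w"
        using less.hyps[OF rmove_size[OF S'(1)] rmove_dnz[OF S'(1) S] w(1)] by blast
      with S'(2) Rs_le_Ls_rmove[OF S'(1)] show ?thesis by linarith
    qed
    then show ?thesis using ge_Rs_sum_sg_iff[OF dnz_cool_list[OF S w(1)] w(2)] by blast
  qed
  obtain v where v: "0 \<le> v" "\<not> list_all is_num (cool_list S v) \<or> list_all is_num S"
    "Rs (sum_sg (cool_list S v)) \<le> Rs (sum_sg (cool_list S u))"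
    using cool_list_hot_witness[OF S less.prems(2)] by blast
  then have "Rs (sum_sg S) \<le> Rs (sum_sg (cool_list S v))" using hot by (auto simp: cool_list_numbers)
  with v(3) have "Rs (sum_sg S) \<le> Rs (sum_sg (cool_list S u))" by linarith
  moreover have "Ls (sum_sg S) \<le> Ls (sum_sg (cool_list S u)) + u"
  proof (cases "list_all is_num S")
    case True
    then show ?thesis using less.prems(2) by (simp add: cool_list_numbers)
  next
    case False
    have "Rs (sum_sg S') \<le> Ls (sum_sg (cool_list S u)) + u" if "lmove S S'" for S'
      using lmove_wall[OF S less.prems(2) that]
        less.hyps[OF lmove_size[OF that] lmove_dnz[OF that S] less.prems(2)] by linarith
    then show ?thesis using Ls_sum_sg_le_iff[OF S False] by fastforce
  qed
  ultimately show ?case ..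
qed

section \<open>The mean is the mast\<close>

theorem mainTheorem4:
  fixes G :: sg
  assumes "wf_sg G"
    and "dicotic G"
    and "nonzugzwang G"
    and "terminals_are_numbers G"
  shows "Ls (cool G (temperature G)) = mean G \<and> Rs (cool G (temperature G)) = mean G"
proof -
  have G: "dnz G" using assms position.self by (rule dnz_if_position)
  define c where "c = temperature G + 1"
  have "0 \<le> c" using temperature_nonneg[OF G] by (simp add: c_def)
  have frozen: "cool G c = num (mast G)" by (rule cool_above_temperature) (simp add: c_def)
  have "real n * mast G \<le> Ls (times_sg n G) \<and> Ls (times_sg n G) \<le> real n * mast G + c" for n
  proof -
    have "Ls (sum_sg (cool_list (replicate n G) c)) = real n * mast G"
      by (simp add: frozen sum_sg_numbers list_all_iff sum_list_replicate)
    moreover have "list_all dnz (replicate n G)" using G by (simp add: list_all_iff)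
    ultimately show ?thesis
      using cool_list_left_bounds[OF _ \<open>0 \<le> c\<close>] cool_list_right_bounds[OF _ \<open>0 \<le> c\<close>]
      by (fastforce simp: times_sg_eq_sum_sg)
  qed
  then have "mean G = mast G" unfolding mean_def by (rule lim_eq_of_linear_bounds)
  with scores_cool_above_temperature[OF G order_refl] show ?thesis by simp
qed

end
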